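(* Let $G$ be a multiplicative Lie algebra with $G\cong E/\mathcal Z(E)$ for some multiplicative Lie algebra $E$. If $\mathcal Z(E\otimes E)=(\mathcal Z(E)\otimes E)(E\otimes\mathcal Z(E))$, then $G\otimes G$ is Lie capable.
   Context: A multiplicative Lie algebra is a group $(G,\cdot)$ with a binary operation $\star$ such that for all $x,y,z\in G$: $x\star x=1$; $x\star(yz)=(x\star y)\,{}^y(x\star z)$; $(xy)\star z={}^x(y\star z)(x\star z)$; $((x\star y)\star{}^yz)((y\star z)\star{}^zx)((z\star x)\star{}^xy)=1$; ${}^z(x\star y)={}^zx\star{}^zy$, where ${}^xy=xyx^{-1}$. $Z(G)$ is the group center, $LZ(G)=\{x: x\star y=1\ \forall y\}$, $\mathcal Z(G)=LZ(G)\cap Z(G)$. $G$ is Lie capable if $G\cong E/\mathcal Z(E)$ for some multiplicative Lie algebra $E$. The tensor square $G\otimes G$ is the multiplicative Lie algebra generated by symbols $x\otimes y$ ($x,y\in G$) subject to, for all $x,x',y,y'\in G$: $x\otimes(yy')=(x\otimes y)({}^yx\otimes{}^yy')$; $(xx')\otimes y=({}^xx'\otimes{}^xy)(x\otimes y)$; $((x\star x')\otimes{}^{x'}y)({}^yx\otimes(x'\star y))^{-1}({}^xx'\otimes(x\star y)^{-1})^{-1}=1$; $({}^{y'}x\otimes(y\star y'))((y\star x)^{-1}\otimes{}^yy')^{-1}((y'\star x)\otimes{}^xy)^{-1}=1$; and $(x\otimes y)\star(x'\otimes y')=(y\star x)^{-1}\otimes(x'\star y')$. For an ideal $I$ of $E$,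 $I\otimes E$ (resp. $E\otimes I$) denotes the subgroup of $E\otimes E$ generated by all $a\otimes b$ with $a\in I,b\in E$ (resp. $a\in E,b\in I$). *)

theory Defs
  imports "HOL-Algebra.Algebra"
begin

record 'a mlie = "'a monoid" +
  lstar :: "'a \<Rightarrow> 'a \<Rightarrow> 'a"

definition mconj :: "('a, 'b) monoid_scheme \<Rightarrow> 'a \<Rightarrow> 'a \<Rightarrow> 'a" where
  "mconj G x y = x \<otimes>\<^bsub>G\<^esub> y \<otimes>\<^bsub>G\<^esub> inv\<^bsub>G\<^esub> x"

definition mult_lie_alg :: "('a, 'b) mlie_scheme \<Rightarrow> bool" where
  "mult_lie_alg G \<longleftrightarrow> group G
   \<and> (\<forall>x\<in>carrier G. \<forall>y\<in>carrier G. lstar G x y \<in> carrier G)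
   \<and> (\<forall>x\<in>carrier G. lstar G x x = \<one>\<^bsub>G\<^esub>)
   \<and> (\<forall>x\<in>carrier G. \<forall>y\<in>carrier G. \<forall>z\<in>carrier G.
        lstar G x (y \<otimes>\<^bsub>G\<^esub> z) = lstar G x y \<otimes>\<^bsub>G\<^esub> mconj G y (lstar G x z))
   \<and> (\<forall>x\<in>carrier G. \<forall>y\<in>carrier G. \<forall>z\<in>carrier G.
        lstar G (x \<otimes>\<^bsub>G\<^esub> y) z = mconj G x (lstar G y z) \<otimes>\<^bsub>G\<^esub> lstar G x z)
   \<and> (\<forall>x\<in>carrier G. \<forall>y\<in>carrier G. \<forall>z\<in>carrier G.
        lstar G (lstar G x y) (mconj G y z) \<otimes>\<^bsub>G\<^esub> lstar G (lstar G y z) (mconj G z x)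
          \<otimes>\<^bsub>G\<^esub> lstar G (lstar G z x) (mconj G x y) = \<one>\<^bsub>G\<^esub>)
   \<and> (\<forall>x\<in>carrier G. \<forall>y\<in>carrier G. \<forall>z\<in>carrier G.
        mconj G z (lstar G x y) = lstar G (mconj G z x) (mconj G z y))"

definition gcenter :: "('a, 'b) monoid_scheme \<Rightarrow> 'a set" where
  "gcenter G = {x \<in> carrier G. \<forall>y\<in>carrier G. x \<otimes>\<^bsub>G\<^esub> y = y \<otimes>\<^bsub>G\<^esub> x}"

definition lie_center :: "('a, 'b) mlie_scheme \<Rightarrow> 'a set" where
  "lie_center G = {x \<in> carrier G. \<forall>y\<in>carrier G. lstar G x y = \<one>\<^bsub>G\<^esub>}"

definition zcal :: "('a, 'b) mlie_scheme \<Rightarrow> 'a set" where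
  "zcal G = lie_center G \<inter> gcenter G"

text \<open>Quotient multiplicative Lie algebra E/N (right cosets as in HOL-Algebra's G Mod N);
  the Lie product of cosets is the coset of the Lie product of representatives.\<close>
definition mlie_quot :: "('a, 'b) mlie_scheme \<Rightarrow> 'a set \<Rightarrow> 'a set mlie" where
  "mlie_quot E N = \<lparr> carrier = rcosets\<^bsub>E\<^esub> N, monoid.mult = set_mult E, one = N,
     lstar = (\<lambda>A B. N #>\<^bsub>E\<^esub> lstar E (SOME a. a \<in> A) (SOME b. b \<in> B)) \<rparr>"

definition mlie_iso :: "('a, 'b) mlie_scheme \<Rightarrow> ('c, 'd) mlie_scheme \<Rightarrow> ('a \<Rightarrow> 'c) set" where
  "mlie_iso G H = {h \<in> iso G H. \<forall>x\<in>carrier G. \<forall>y\<in>carrier G.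
      h (lstar G x y) = lstar H (h x) (h y)}"

definition mlie_is_iso :: "('a, 'b) mlie_scheme \<Rightarrow> ('c, 'd) mlie_scheme \<Rightarrow> bool" where
  "mlie_is_iso G H \<longleftrightarrow> mlie_iso G H \<noteq> {}"

text \<open>Lie capability, with the witness E ranging over a given HOL type 'c.\<close>
definition lie_capable_in :: "'c itself \<Rightarrow> ('a, 'b) mlie_scheme \<Rightarrow> bool" where
  "lie_capable_in (T::'c itself) G \<longleftrightarrow>
     (\<exists>E :: 'c mlie. mult_lie_alg E \<and> mlie_is_iso G (mlie_quot E (zcal E)))"

text \<open>Terms of the free multiplicative Lie algebra on symbols x (x) y.\<close>
datatype 'a tterm = TGen 'a 'a | TOne | TMul "'a tterm" "'a tterm" | TInv "'a tterm"
  | TStar "'a tterm" "'a tterm"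

definition tconj :: "'a tterm \<Rightarrow> 'a tterm \<Rightarrow> 'a tterm" where
  "tconj x y = TMul (TMul x y) (TInv x)"

fun twf :: "'a set \<Rightarrow> 'a tterm \<Rightarrow> bool" where
  "twf A (TGen x y) \<longleftrightarrow> x \<in> A \<and> y \<in> A"
| "twf A TOne \<longleftrightarrow> True"
| "twf A (TMul s t) \<longleftrightarrow> twf A s \<and> twf A t"
| "twf A (TInv s) \<longleftrightarrow> twf A s"
| "twf A (TStar s t) \<longleftrightarrow> twf A s \<and> twf A t"

text \<open>The smallest congruence on terms making the quotient a multiplicative Lie algebra
  and satisfying the defining relations of the tensor square.\<close>
inductive teq :: "('a, 'b) mlie_scheme \<Rightarrow> 'a tterm \<Rightarrow> 'a tterm \<Rightarrow> bool" for G where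
  refl: "teq G t t"
| sym: "teq G s t \<Longrightarrow> teq G t s"
| trans: "teq G s t \<Longrightarrow> teq G t u \<Longrightarrow> teq G s u"
| cong_mul: "teq G s s' \<Longrightarrow> teq G t t' \<Longrightarrow> teq G (TMul s t) (TMul s' t')"
| cong_inv: "teq G s s' \<Longrightarrow> teq G (TInv s) (TInv s')"
| cong_star: "teq G s s' \<Longrightarrow> teq G t t' \<Longrightarrow> teq G (TStar s t) (TStar s' t')"
| assoc: "teq G (TMul (TMul x y) z) (TMul x (TMul y z))"
| lunit: "teq G (TMul TOne x) x"
| linv: "teq G (TMul (TInv x) x) TOne"
| ax1: "teq G (TStar x x) TOne"
| ax2: "teq G (TStar x (TMul y z)) (TMul (TStar x y) (tconj y (TStar x z)))"
| ax3: "teq G (TStar (TMul x y) z) (TMul (tconj x (TStar y z)) (TStar x z))"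
| ax4: "teq G (TMul (TMul (TStar (TStar x y) (tconj y z)) (TStar (TStar y z) (tconj z x)))
                 (TStar (TStar z x) (tconj x y))) TOne"
| ax5: "teq G (tconj z (TStar x y)) (TStar (tconj z x) (tconj z y))"
| rel1: "\<lbrakk>x \<in> carrier G; y \<in> carrier G; y' \<in> carrier G\<rbrakk> \<Longrightarrow>
    teq G (TGen x (y \<otimes>\<^bsub>G\<^esub> y')) (TMul (TGen x y) (TGen (mconj G y x) (mconj G y y')))"
| rel2: "\<lbrakk>x \<in> carrier G; x' \<in> carrier G; y \<in> carrier G\<rbrakk> \<Longrightarrow>
    teq G (TGen (x \<otimes>\<^bsub>G\<^esub> x') y) (TMul (TGen (mconj G x x') (mconj G x y)) (TGen x y))"
| rel3: "\<lbrakk>x \<in> carrier G; x' \<in> carrier G; y \<in> carrier G\<rbrakk> \<Longrightarrow>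
    teq G (TMul (TMul (TGen (lstar G x x') (mconj G x' y))
                      (TInv (TGen (mconj G y x) (lstar G x' y))))
                (TInv (TGen (mconj G x x') (inv\<^bsub>G\<^esub> (lstar G x y))))) TOne"
| rel4: "\<lbrakk>x \<in> carrier G; y \<in> carrier G; y' \<in> carrier G\<rbrakk> \<Longrightarrow>
    teq G (TMul (TMul (TGen (mconj G y' x) (lstar G y y'))
                      (TInv (TGen (inv\<^bsub>G\<^esub> (lstar G y x)) (mconj G y y'))))
                (TInv (TGen (lstar G y' x) (mconj G x y)))) TOne"
| rel5: "\<lbrakk>x \<in> carrier G; y \<in> carrier G; x' \<in> carrier G; y' \<in> carrier G\<rbrakk> \<Longrightarrow>
    teq G (TStar (TGen x y) (TGen x' y')) (TGen (inv\<^bsub>G\<^esub> (lstar G y x)) (lstar G x' y'))"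

definition tcls :: "('a, 'b) mlie_scheme \<Rightarrow> 'a tterm \<Rightarrow> 'a tterm set" where
  "tcls G t = {s. teq G t s}"

definition tensor_sq :: "('a, 'b) mlie_scheme \<Rightarrow> 'a tterm set mlie" where
  "tensor_sq G = \<lparr> carrier = {tcls G t | t. twf (carrier G) t},
     monoid.mult = (\<lambda>A B. tcls G (TMul (SOME a. a \<in> A) (SOME b. b \<in> B))),
     one = tcls G TOne,
     lstar = (\<lambda>A B. tcls G (TStar (SOME a. a \<in> A) (SOME b. b \<in> B))) \<rparr>"

definition tgen :: "('a, 'b) mlie_scheme \<Rightarrow> 'a \<Rightarrow> 'a \<Rightarrow> 'a tterm set" where
  "tgen G a b = tcls G (TGen a b)"

definition tens_left :: "('a, 'b) mlie_scheme \<Rightarrow> 'a set \<Rightarrow> 'a tterm set set" where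
  "tens_left E I = generate (tensor_sq E) {tgen E a b | a b. a \<in> I \<and> b \<in> carrier E}"

definition tens_right :: "('a, 'b) mlie_scheme \<Rightarrow> 'a set \<Rightarrow> 'a tterm set set" where
  "tens_right E I = generate (tensor_sq E) {tgen E a b | a b. a \<in> carrier E \<and> b \<in> I}"

end

theory Submission
  imports Defs
begin

text \<open>Let \<open>proj : E \<rightarrow> G\<close> be the quotient map by \<open>Z(E)\<close> and \<open>lift\<close> a set-theoretic section of it.
  The induced map \<open>E \<otimes> E \<rightarrow> G \<otimes> G\<close> kills \<open>N = Z(E \<otimes> E)\<close>: by hypothesis \<open>N\<close> is generated
  by symbols \<open>a \<otimes> b\<close> with \<open>a\<close> or \<open>b\<close> in \<open>Z(E)\<close>, which go to \<open>1 \<otimes> y = x \<otimes> 1 = 1\<close>.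
  Conversely, sending a term of \<open>G \<otimes> G\<close> to the \<open>N\<close>-coset of its lift respects the
  defining relations, because changing an entry of a symbol by a central factor multiplies the
  symbol by an element of \<open>N\<close>. The two maps are mutually inverse, so
  \<open>G \<otimes> G \<cong> (E \<otimes> E)/Z(E \<otimes> E)\<close>.\<close>

context group
begin

lemma inv_mult_cancel_left [simp]: "\<lbrakk>x \<in> carrier G; a \<in> carrier G\<rbrakk> \<Longrightarrow> inv x \<otimes> (x \<otimes> a) = a"
  by (simp add: m_assoc [symmetric])

end

lemma mlie_quot_simps [simp]:
  "carrier (mlie_quot E N) = rcosets\<^bsub>E\<^esub> N"
  "monoid.mult (mlie_quot E N) = set_mult E"
  "one (mlie_quot E N) = N"
  by (simp_all add: mlie_quot_def)

locale mult_lie_algebra =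
  fixes M :: "('a, 'b) mlie_scheme" (structure)
  assumes mult_lie_alg: "mult_lie_alg M"

sublocale mult_lie_algebra \<subseteq> group M
  using mult_lie_alg by (simp add: mult_lie_alg_def)

context mult_lie_algebra
begin

lemma star_closed [simp]: "\<lbrakk>x \<in> carrier M; y \<in> carrier M\<rbrakk> \<Longrightarrow> lstar M x y \<in> carrier M"
  using mult_lie_alg unfolding mult_lie_alg_def by blast

lemma star_self [simp]: "x \<in> carrier M \<Longrightarrow> lstar M x x = \<one>"
  using mult_lie_alg unfolding mult_lie_alg_def by blast

lemma star_mult_right:
  "\<lbrakk>x \<in> carrier M; y \<in> carrier M; z \<in> carrier M\<rbrakk> \<Longrightarrow>
   lstar M x (y \<otimes> z) = lstar M x y \<otimes> (y \<otimes> lstar M x z \<otimes> inv y)"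
  using mult_lie_alg unfolding mult_lie_alg_def mconj_def by blast

lemma star_mult_left:
  "\<lbrakk>x \<in> carrier M; y \<in> carrier M; z \<in> carrier M\<rbrakk> \<Longrightarrow>
   lstar M (x \<otimes> y) z = (x \<otimes> lstar M y z \<otimes> inv x) \<otimes> lstar M x z"
  using mult_lie_alg unfolding mult_lie_alg_def mconj_def by blast

lemma conj_eq_one_iff:
  "\<lbrakk>x \<in> carrier M; a \<in> carrier M\<rbrakk> \<Longrightarrow> x \<otimes> a \<otimes> inv x = \<one> \<longleftrightarrow> a = \<one>"
proof
  assume x: "x \<in> carrier M" and a: "a \<in> carrier M" and h: "x \<otimes> a \<otimes> inv x = \<one>"
  have "inv x \<otimes> (x \<otimes> a \<otimes> inv x) \<otimes> x = a" using x a by (simp add: m_assoc)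
  then show "a = \<one>" using h x by simp
qed simp

lemma star_one_left: "y \<in> carrier M \<Longrightarrow> lstar M \<one> y = \<one>"
  using star_mult_left[of \<one> \<one> y] by simp

lemma star_antisym: assumes "x \<in> carrier M" "y \<in> carrier M"
  shows "lstar M x y = inv (lstar M y x)"
proof -
  have "\<one> = lstar M (y \<otimes> x) (y \<otimes> x)" using assms by simp
  also have "\<dots> = (y \<otimes> lstar M x (y \<otimes> x) \<otimes> inv y) \<otimes> lstar M y (y \<otimes> x)"
    using assms by (intro star_mult_left) auto
  also have "\<dots> = (y \<otimes> lstar M x y \<otimes> inv y) \<otimes> (y \<otimes> lstar M y x \<otimes> inv y)"
    using assms by (simp add: star_mult_right)
  also have "\<dots> = y \<otimes> (lstar M x y \<otimes> lstar M y x) \<otimes> inv y"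
    using assms by (simp add: m_assoc)
  finally have "y \<otimes> (lstar M x y \<otimes> lstar M y x) \<otimes> inv y = \<one>"
    by (rule HOL.sym)
  then have "lstar M x y \<otimes> lstar M y x = \<one>"
    using assms by (simp add: conj_eq_one_iff)
  then show ?thesis using assms by (simp add: inv_equality)
qed

lemma zcal_iff:
  "n \<in> zcal M \<longleftrightarrow> n \<in> carrier M \<and> (\<forall>y\<in>carrier M. n \<otimes> y = y \<otimes> n \<and> lstar M n y = \<one>)"
  by (auto simp: zcal_def lie_center_def gcenter_def)

lemma
  assumes "n \<in> zcal M"
  shows zcal_closed: "n \<in> carrier M"
    and zcal_commute: "y \<in> carrier M \<Longrightarrow> n \<otimes> y = y \<otimes> n"
    and zcal_star_left: "y \<in> carrier M \<Longrightarrow> lstar M n y = \<one>"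
    and zcal_star_right: "y \<in> carrier M \<Longrightarrow> lstar M y n = \<one>"
    and zcal_conj: "y \<in> carrier M \<Longrightarrow> n \<otimes> y \<otimes> inv n = y"
proof -
  show n: "n \<in> carrier M" using assms by (simp add: zcal_iff)
  assume y: "y \<in> carrier M"
  show nl: "lstar M n y = \<one>" and "n \<otimes> y = y \<otimes> n" using assms y by (simp_all add: zcal_iff)
  then show "n \<otimes> y \<otimes> inv n = y" using n y by (simp add: m_assoc)
  show "lstar M y n = \<one>" using star_antisym[OF y n] nl by simp
qed

lemma zcal_subgroup: "subgroup (zcal M) M"
proof
  show "zcal M \<subseteq> carrier M" using zcal_closed by blast
  show "\<one> \<in> zcal M" by (simp add: zcal_iff star_one_left)
next
  fix x y assume x: "x \<in> zcal M" and y: "y \<in> zcal M"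
  have "x \<otimes> y \<otimes> z = z \<otimes> (x \<otimes> y)" if z: "z \<in> carrier M" for z
  proof -
    have "x \<otimes> y \<otimes> z = x \<otimes> (z \<otimes> y)"
      using x y z by (simp add: m_assoc zcal_closed zcal_commute[OF y z])
    also have "\<dots> = z \<otimes> x \<otimes> y"
      using x y z by (simp add: m_assoc [symmetric] zcal_closed zcal_commute[OF x z])
    finally show ?thesis using x y z by (simp add: m_assoc zcal_closed)
  qed
  moreover have "lstar M (x \<otimes> y) z = \<one>" if "z \<in> carrier M" for z
    using x y that by (simp add: star_mult_left zcal_closed zcal_star_left)
  ultimately show "x \<otimes> y \<in> zcal M"
    using zcal_closed[OF x] zcal_closed[OF y] by (simp add: zcal_iff)
next
  fix x assume x: "x \<in> zcal M"
  have "lstar M (inv x) z = \<one>" if z: "z \<in> carrier M" for z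
  proof -
    have "\<one> = lstar M (x \<otimes> inv x) z" using x z by (simp add: zcal_closed star_one_left)
    also have "\<dots> = (x \<otimes> lstar M (inv x) z \<otimes> inv x) \<otimes> lstar M x z"
      using x z by (intro star_mult_left) (auto simp: zcal_closed)
    also have "\<dots> = x \<otimes> lstar M (inv x) z \<otimes> inv x"
      using x z by (simp add: zcal_closed zcal_star_left)
    finally have "x \<otimes> lstar M (inv x) z \<otimes> inv x = \<one>"
      by (rule HOL.sym)
    then show ?thesis using x z by (simp add: conj_eq_one_iff zcal_closed)
  qed
  moreover have "inv x \<otimes> z = z \<otimes> inv x" if "z \<in> carrier M" for z
    using that x by (simp add: zcal_commute[OF x that] zcal_closed inv_solve_left inv_solve_right m_assoc)
  ultimately show "inv x \<in> zcal M"
    using zcal_closed[OF x] by (simp add: zcal_iff)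
qed

lemma zcal_normal: "zcal M \<lhd> M"
  unfolding normal_inv_iff
proof (intro conjI ballI zcal_subgroup)
  fix x n assume "x \<in> carrier M" and "n \<in> zcal M"
  then show "x \<otimes> n \<otimes> inv x \<in> zcal M"
    by (simp add: zcal_closed zcal_commute [symmetric] m_assoc)
qed

lemma star_zcal_left: "\<lbrakk>n \<in> zcal M; x \<in> carrier M; y \<in> carrier M\<rbrakk> \<Longrightarrow> lstar M (n \<otimes> x) y = lstar M x y"
  by (simp add: star_mult_left zcal_closed zcal_conj zcal_star_left)

lemma star_zcal_right: "\<lbrakk>n \<in> zcal M; x \<in> carrier M; y \<in> carrier M\<rbrakk> \<Longrightarrow> lstar M x (n \<otimes> y) = lstar M x y"
  by (simp add: star_mult_right zcal_closed zcal_conj zcal_star_right)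

lemma star_rcos_zcal:
  "\<lbrakk>x \<in> carrier M; y \<in> carrier M; x' \<in> zcal M #> x; y' \<in> zcal M #> y\<rbrakk> \<Longrightarrow> lstar M x' y' = lstar M x y"
  by (auto simp: r_coset_def star_zcal_left star_zcal_right zcal_closed)

lemma group_mlie_quot_zcal: "group (mlie_quot M (zcal M))"
proof -
  have "group (M Mod zcal M)" by (rule normal.factorgroup_is_group [OF zcal_normal])
  then show ?thesis
    unfolding group_def group_axioms_def monoid_def Units_def by (simp add: mlie_quot_def FactGroup_def)
qed

lemma rcos_zcal_mult: "\<lbrakk>x \<in> carrier M; y \<in> carrier M\<rbrakk> \<Longrightarrow> (zcal M #> x) <#> (zcal M #> y) = zcal M #> (x \<otimes> y)"
  by (rule normal.rcos_sum [OF zcal_normal])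

lemma rcos_zcal_inv: assumes "x \<in> carrier M"
  shows "inv\<^bsub>mlie_quot M (zcal M)\<^esub> (zcal M #> x) = zcal M #> inv x"
proof (rule group.inv_equality [OF group_mlie_quot_zcal])
  show "(zcal M #> inv x) \<otimes>\<^bsub>mlie_quot M (zcal M)\<^esub> (zcal M #> x) = \<one>\<^bsub>mlie_quot M (zcal M)\<^esub>"
    using assms by (simp add: mlie_quot_def rcos_zcal_mult coset_join2 zcal_subgroup subgroup.one_closed)
qed (use assms in \<open>simp_all add: mlie_quot_def rcosetsI zcal_closed subsetI\<close>)

lemma rcos_zcal_star:
  assumes "x \<in> carrier M" "y \<in> carrier M"
  shows "lstar (mlie_quot M (zcal M)) (zcal M #> x) (zcal M #> y) = zcal M #> lstar M x y"
proof -
  have "(SOME a. a \<in> zcal M #> x) \<in> zcal M #> x" "(SOME b. b \<in> zcal M #> y) \<in> zcal M #> y"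
    using assms by (meson someI rcos_self zcal_subgroup)+
  then show ?thesis using assms by (simp add: mlie_quot_def star_rcos_zcal)
qed

end

section \<open>The tensor square\<close>

lemma tcls_eq_iff: "tcls G s = tcls G t \<longleftrightarrow> teq G s t"
proof
  assume "tcls G s = tcls G t"
  then show "teq G s t" by (auto simp: tcls_def teq.refl)
qed (auto simp: tcls_def intro: teq.trans teq.sym)

lemma teq_some_tcls: "teq G t (SOME a. a \<in> tcls G t)"
  using someI [of "\<lambda>a. a \<in> tcls G t" t] by (simp add: tcls_def teq.refl)

lemma tcls_in_tensor_sq: "twf (carrier G) t \<Longrightarrow> tcls G t \<in> carrier (tensor_sq G)"
  by (auto simp: tensor_sq_def)

lemma tensor_sq_carrierE:
  assumes "x \<in> carrier (tensor_sq G)"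
  obtains t where "twf (carrier G) t" "x = tcls G t"
  using assms by (auto simp: tensor_sq_def)

lemma tensor_sq_mult_tcls: "tcls G s \<otimes>\<^bsub>tensor_sq G\<^esub> tcls G t = tcls G (TMul s t)"
  unfolding tensor_sq_def by (auto simp: tcls_eq_iff intro!: teq.cong_mul teq.sym [OF teq_some_tcls])

lemma tensor_sq_star_tcls: "lstar (tensor_sq G) (tcls G s) (tcls G t) = tcls G (TStar s t)"
  unfolding tensor_sq_def by (auto simp: tcls_eq_iff intro!: teq.cong_star teq.sym [OF teq_some_tcls])

lemma tensor_sq_one: "\<one>\<^bsub>tensor_sq G\<^esub> = tcls G TOne"
  by (simp add: tensor_sq_def)

lemma group_tensor_sq: "group (tensor_sq G)"
proof (rule groupI)
  fix x y z
  assume "x \<in> carrier (tensor_sq G)" "y \<in> carrier (tensor_sq G)" "z \<in> carrier (tensor_sq G)"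
  then show "x \<otimes>\<^bsub>tensor_sq G\<^esub> y \<otimes>\<^bsub>tensor_sq G\<^esub> z = x \<otimes>\<^bsub>tensor_sq G\<^esub> (y \<otimes>\<^bsub>tensor_sq G\<^esub> z)"
    by (elim tensor_sq_carrierE) (simp add: tensor_sq_mult_tcls tcls_eq_iff teq.assoc)
next
  fix x assume "x \<in> carrier (tensor_sq G)"
  then show "\<exists>y\<in>carrier (tensor_sq G). y \<otimes>\<^bsub>tensor_sq G\<^esub> x = \<one>\<^bsub>tensor_sq G\<^esub>"
  proof (elim tensor_sq_carrierE)
    fix t assume "twf (carrier G) t" "x = tcls G t"
    then show ?thesis
      by (intro bexI [of _ "tcls G (TInv t)"])
        (simp_all add: tensor_sq_mult_tcls tensor_sq_one tcls_eq_iff teq.linv tcls_in_tensor_sq)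
  qed
next
  fix x y assume "x \<in> carrier (tensor_sq G)" "y \<in> carrier (tensor_sq G)"
  then show "x \<otimes>\<^bsub>tensor_sq G\<^esub> y \<in> carrier (tensor_sq G)"
    by (elim tensor_sq_carrierE) (simp add: tensor_sq_mult_tcls tcls_in_tensor_sq)
next
  fix x assume "x \<in> carrier (tensor_sq G)"
  then show "\<one>\<^bsub>tensor_sq G\<^esub> \<otimes>\<^bsub>tensor_sq G\<^esub> x = x"
    by (elim tensor_sq_carrierE) (simp add: tensor_sq_mult_tcls tensor_sq_one tcls_eq_iff teq.lunit)
qed (simp add: tensor_sq_one tcls_in_tensor_sq)

lemma tensor_sq_inv_tcls:
  "twf (carrier G) t \<Longrightarrow> inv\<^bsub>tensor_sq G\<^esub> (tcls G t) = tcls G (TInv t)"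
  by (rule group.inv_equality [OF group_tensor_sq])
    (auto simp: tensor_sq_mult_tcls tensor_sq_one tcls_eq_iff teq.linv intro!: tcls_in_tensor_sq)

lemma tensor_sq_mconj_tcls:
  "\<lbrakk>twf (carrier G) s; twf (carrier G) t\<rbrakk> \<Longrightarrow> mconj (tensor_sq G) (tcls G s) (tcls G t) = tcls G (tconj s t)"
  by (simp add: mconj_def tensor_sq_inv_tcls tensor_sq_mult_tcls tconj_def)

lemma mult_lie_alg_tensor_sq: "mult_lie_alg (tensor_sq G)"
  unfolding mult_lie_alg_def
proof (intro conjI ballI group_tensor_sq)
  fix x y z
  assume "x \<in> carrier (tensor_sq G)" "y \<in> carrier (tensor_sq G)" "z \<in> carrier (tensor_sq G)"
  then obtain a b c where abc: "twf (carrier G) a" "twf (carrier G) b" "twf (carrier G) c"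
    and xyz: "x = tcls G a" "y = tcls G b" "z = tcls G c"
    by (metis tensor_sq_carrierE)
  note simps = xyz tensor_sq_star_tcls tensor_sq_mult_tcls tensor_sq_mconj_tcls tensor_sq_one tcls_eq_iff
  show "lstar (tensor_sq G) x y \<in> carrier (tensor_sq G)"
    using abc by (simp add: simps tcls_in_tensor_sq)
  show "lstar (tensor_sq G) x x = \<one>\<^bsub>tensor_sq G\<^esub>"
    using abc by (simp add: simps teq.ax1)
  show "lstar (tensor_sq G) x (y \<otimes>\<^bsub>tensor_sq G\<^esub> z) =
        lstar (tensor_sq G) x y \<otimes>\<^bsub>tensor_sq G\<^esub> mconj (tensor_sq G) y (lstar (tensor_sq G) x z)"
    using abc by (simp add: simps teq.ax2)
  show "lstar (tensor_sq G) (x \<otimes>\<^bsub>tensor_sq G\<^esub> y) z =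
        mconj (tensor_sq G) x (lstar (tensor_sq G) y z) \<otimes>\<^bsub>tensor_sq G\<^esub> lstar (tensor_sq G) x z"
    using abc by (simp add: simps teq.ax3)
  show "lstar (tensor_sq G) (lstar (tensor_sq G) x y) (mconj (tensor_sq G) y z) \<otimes>\<^bsub>tensor_sq G\<^esub>
        lstar (tensor_sq G) (lstar (tensor_sq G) y z) (mconj (tensor_sq G) z x) \<otimes>\<^bsub>tensor_sq G\<^esub>
        lstar (tensor_sq G) (lstar (tensor_sq G) z x) (mconj (tensor_sq G) x y) = \<one>\<^bsub>tensor_sq G\<^esub>"
    using abc by (simp add: simps teq.ax4)
  show "mconj (tensor_sq G) z (lstar (tensor_sq G) x y) =
        lstar (tensor_sq G) (mconj (tensor_sq G) z x) (mconj (tensor_sq G) z y)"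
    using abc by (simp add: simps teq.ax5)
qed

context mult_lie_algebra
begin

lemma tensor_sq_TGen_one_left: assumes "y \<in> carrier M" shows "tcls M (TGen \<one> y) = \<one>\<^bsub>tensor_sq M\<^esub>"
proof -
  have "teq M (TGen (\<one> \<otimes> \<one>) y) (TMul (TGen (mconj M \<one> \<one>) (mconj M \<one> y)) (TGen \<one> y))"
    using assms by (intro teq.rel2) simp_all
  then have "tcls M (TGen \<one> y) = tcls M (TGen \<one> y) \<otimes>\<^bsub>tensor_sq M\<^esub> tcls M (TGen \<one> y)"
    using assms by (simp add: mconj_def tensor_sq_mult_tcls tcls_eq_iff)
  moreover have "tcls M (TGen \<one> y) \<in> carrier (tensor_sq M)"
    using assms by (simp add: tcls_in_tensor_sq)
  ultimately show ?thesis
    using group.l_cancel_one' [OF group_tensor_sq] by blast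
qed

lemma tensor_sq_TGen_one_right: assumes "x \<in> carrier M" shows "tcls M (TGen x \<one>) = \<one>\<^bsub>tensor_sq M\<^esub>"
proof -
  have "teq M (TGen x (\<one> \<otimes> \<one>)) (TMul (TGen x \<one>) (TGen (mconj M \<one> x) (mconj M \<one> \<one>)))"
    using assms by (intro teq.rel1) simp_all
  then have "tcls M (TGen x \<one>) = tcls M (TGen x \<one>) \<otimes>\<^bsub>tensor_sq M\<^esub> tcls M (TGen x \<one>)"
    using assms by (simp add: mconj_def tensor_sq_mult_tcls tcls_eq_iff)
  moreover have "tcls M (TGen x \<one>) \<in> carrier (tensor_sq M)"
    using assms by (simp add: tcls_in_tensor_sq)
  ultimately show ?thesis
    using group.l_cancel_one' [OF group_tensor_sq] by blast
qed

end

section \<open>Functoriality of the tensor square\<close>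

definition mlie_hom :: "('a, 'b) mlie_scheme \<Rightarrow> ('c, 'd) mlie_scheme \<Rightarrow> ('a \<Rightarrow> 'c) set" where
  "mlie_hom G H = {h \<in> hom G H. \<forall>x\<in>carrier G. \<forall>y\<in>carrier G.
      h (lstar G x y) = lstar H (h x) (h y)}"

lemma map_tterm_tconj [simp]: "map_tterm h (tconj x y) = tconj (map_tterm h x) (map_tterm h y)"
  by (simp add: tconj_def)

lemma twf_map_tterm: "\<lbrakk>twf A t; \<And>x. x \<in> A \<Longrightarrow> h x \<in> B\<rbrakk> \<Longrightarrow> twf B (map_tterm h t)"
  by (induction t) auto

lemma teq_map_tterm:
  assumes E: "mult_lie_alg E" and G: "mult_lie_alg G" and h: "h \<in> mlie_hom E G"
    and "teq E s t"
  shows "teq G (map_tterm h s) (map_tterm h t)"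
proof -
  interpret E: mult_lie_algebra E by (rule mult_lie_algebra.intro [OF E])
  interpret G: mult_lie_algebra G by (rule mult_lie_algebra.intro [OF G])
  interpret group_hom E G h
    using h by (simp add: group_hom_def group_hom_axioms_def mlie_hom_def E.is_group G.is_group)
  have h_star: "h (lstar E x y) = lstar G (h x) (h y)" if "x \<in> carrier E" "y \<in> carrier E" for x y
    using h that by (simp add: mlie_hom_def)
  from \<open>teq E s t\<close> show ?thesis
  proof (induction rule: teq.induct)
    case (rel1 x y y')
    then show ?case using teq.rel1 [of "h x" G "h y" "h y'"] by (simp add: mconj_def h_star)
  next
    case (rel2 x x' y)
    then show ?case using teq.rel2 [of "h x" G "h x'" "h y"] by (simp add: mconj_def h_star)
  next
    case (rel3 x x' y)
    then show ?case using teq.rel3 [of "h x" G "h x'" "h y"] by (simp add: mconj_def h_star)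
  next
    case (rel4 x y y')
    then show ?case using teq.rel4 [of "h x" G "h y" "h y'"] by (simp add: mconj_def h_star)
  next
    case (rel5 x y x' y')
    then show ?case using teq.rel5 [of "h x" G "h y" "h x'" "h y'"] by (simp add: mconj_def h_star)
  qed (auto intro: teq.intros)
qed

definition tensor_map :: "('c, 'd) mlie_scheme \<Rightarrow> ('a \<Rightarrow> 'c) \<Rightarrow> 'a tterm set \<Rightarrow> 'c tterm set" where
  "tensor_map G h A = tcls G (map_tterm h (SOME t. t \<in> A))"

lemma tensor_map_tcls:
  assumes "mult_lie_alg E" "mult_lie_alg G" "h \<in> mlie_hom E G"
  shows "tensor_map G h (tcls E t) = tcls G (map_tterm h t)"
  unfolding tensor_map_def tcls_eq_iff
  by (rule teq_map_tterm [OF assms teq.sym [OF teq_some_tcls]])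

lemma tensor_map_hom:
  assumes "mult_lie_alg E" "mult_lie_alg G" "h \<in> mlie_hom E G"
  shows "tensor_map G h \<in> hom (tensor_sq E) (tensor_sq G)"
proof -
  have "h x \<in> carrier G" if "x \<in> carrier E" for x
    using assms(3) that by (auto simp: mlie_hom_def hom_def)
  then show ?thesis
    unfolding hom_def
    by (auto elim!: tensor_sq_carrierE intro!: tcls_in_tensor_sq twf_map_tterm
        simp: tensor_map_tcls [OF assms] tensor_sq_mult_tcls)
qed

lemma (in group_hom) hom_eq_if_rcos_eq:
  assumes "subgroup N G" "N \<subseteq> kernel G H h" "x \<in> carrier G" "y \<in> carrier G" "N #> x = N #> y"
  shows "h x = h y"
proof -
  have "x \<in> N #> y"
    using assms by (intro G.repr_independenceD) simp_all
  then obtain n where n: "n \<in> N" "x = n \<otimes> y" by (auto simp: r_coset_def)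
  then have "h n = \<one>\<^bsub>H\<^esub>" "n \<in> carrier G" using assms(2) by (auto simp: kernel_def)
  then show ?thesis using n assms(4) by simp
qed

section \<open>Tensor squares of central quotients\<close>

locale central_quotient =
  fixes G :: "('a, 'b) mlie_scheme" and E :: "('c, 'd) mlie_scheme" and \<phi> :: "'a \<Rightarrow> 'c set"
  assumes mult_lie_alg_G: "mult_lie_alg G" and mult_lie_alg_E: "mult_lie_alg E"
    and \<phi>_iso: "\<phi> \<in> mlie_iso G (mlie_quot E (zcal E))"
begin

sublocale G: mult_lie_algebra G by (rule mult_lie_algebra.intro [OF mult_lie_alg_G])
sublocale E: mult_lie_algebra E by (rule mult_lie_algebra.intro [OF mult_lie_alg_E])

lemma \<phi>_group_hom: "group_hom G (mlie_quot E (zcal E)) \<phi>"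
  using \<phi>_iso E.group_mlie_quot_zcal
  by (simp add: group_hom_def group_hom_axioms_def mlie_iso_def iso_def G.is_group)

lemma \<phi>_bij: "bij_betw \<phi> (carrier G) (rcosets\<^bsub>E\<^esub> zcal E)"
  using \<phi>_iso by (simp add: mlie_iso_def iso_def mlie_quot_def)

lemma \<phi>_mult: "\<lbrakk>x \<in> carrier G; y \<in> carrier G\<rbrakk> \<Longrightarrow> \<phi> (x \<otimes>\<^bsub>G\<^esub> y) = \<phi> x <#>\<^bsub>E\<^esub> \<phi> y"
  using group_hom.hom_mult [OF \<phi>_group_hom] by (simp add: mlie_quot_def)

lemma \<phi>_inv: "x \<in> carrier G \<Longrightarrow> \<phi> (inv\<^bsub>G\<^esub> x) = inv\<^bsub>mlie_quot E (zcal E)\<^esub> \<phi> x"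
  by (rule group_hom.hom_inv [OF \<phi>_group_hom])

lemma \<phi>_one: "\<phi> \<one>\<^bsub>G\<^esub> = zcal E"
  using group_hom.hom_one [OF \<phi>_group_hom] by (simp add: mlie_quot_def)

lemma \<phi>_star:
  "\<lbrakk>x \<in> carrier G; y \<in> carrier G\<rbrakk> \<Longrightarrow> \<phi> (lstar G x y) = lstar (mlie_quot E (zcal E)) (\<phi> x) (\<phi> y)"
  using \<phi>_iso by (simp add: mlie_iso_def)

lemma \<phi>_inj: "\<lbrakk>x \<in> carrier G; y \<in> carrier G; \<phi> x = \<phi> y\<rbrakk> \<Longrightarrow> x = y"
  using \<phi>_bij by (auto simp: bij_betw_def inj_on_def)

text \<open>\<open>lift\<close> is \<open>\<one>\<close> off the carrier, so that lifting any term yields a well-formed one.\<close>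
definition lift :: "'a \<Rightarrow> 'c" where
  "lift g = (if g \<in> carrier G then SOME a. a \<in> \<phi> g else \<one>\<^bsub>E\<^esub>)"

definition proj :: "'c \<Rightarrow> 'a" where
  "proj a = inv_into (carrier G) \<phi> (zcal E #>\<^bsub>E\<^esub> a)"

lemma lift_in_rcos: assumes "g \<in> carrier G"
  obtains a where "a \<in> carrier E" "\<phi> g = zcal E #>\<^bsub>E\<^esub> a" "lift g \<in> zcal E #>\<^bsub>E\<^esub> a"
proof -
  have "\<phi> g \<in> rcosets\<^bsub>E\<^esub> zcal E" using assms \<phi>_bij bij_betwE by blast
  then obtain a where a: "a \<in> carrier E" "\<phi> g = zcal E #>\<^bsub>E\<^esub> a"
    by (auto simp: RCOSETS_def)
  then have "lift g \<in> zcal E #>\<^bsub>E\<^esub> a"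
    using assms someI [of "\<lambda>b. b \<in> \<phi> g" a] by (simp add: lift_def E.rcos_self E.zcal_subgroup)
  with a that show ?thesis by blast
qed

lemma lift_closed [simp]: "lift g \<in> carrier E"
proof (cases "g \<in> carrier G")
  case True
  then obtain a where "a \<in> carrier E" "\<phi> g = zcal E #>\<^bsub>E\<^esub> a" "lift g \<in> zcal E #>\<^bsub>E\<^esub> a"
    by (rule lift_in_rcos)
  then show ?thesis using subgroup.elemrcos_carrier [OF E.zcal_subgroup E.is_group] by blast
qed (simp add: lift_def)

lemma rcos_lift: "g \<in> carrier G \<Longrightarrow> zcal E #>\<^bsub>E\<^esub> lift g = \<phi> g"
  by (metis lift_in_rcos E.repr_independence E.zcal_subgroup)

lemma proj_closed: "a \<in> carrier E \<Longrightarrow> proj a \<in> carrier G"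
  and \<phi>_proj: "a \<in> carrier E \<Longrightarrow> \<phi> (proj a) = zcal E #>\<^bsub>E\<^esub> a"
proof -
  assume "a \<in> carrier E"
  then have "zcal E #>\<^bsub>E\<^esub> a \<in> \<phi> ` carrier G"
    using \<phi>_bij by (simp add: bij_betw_def E.rcosetsI E.zcal_closed subsetI)
  then show "proj a \<in> carrier G" "\<phi> (proj a) = zcal E #>\<^bsub>E\<^esub> a"
    by (simp_all add: proj_def inv_into_into f_inv_into_f)
qed

lemma proj_mlie_hom: "proj \<in> mlie_hom E G"
  unfolding mlie_hom_def hom_def
  by (auto intro!: \<phi>_inj simp: proj_closed \<phi>_proj \<phi>_mult \<phi>_star E.rcos_zcal_mult E.rcos_zcal_star)

lemma proj_zcal: "z \<in> zcal E \<Longrightarrow> proj z = \<one>\<^bsub>G\<^esub>"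
  by (rule \<phi>_inj) (simp_all add: proj_closed \<phi>_proj E.zcal_closed \<phi>_one E.coset_join2 E.zcal_subgroup)

lemma proj_lift: "g \<in> carrier G \<Longrightarrow> proj (lift g) = g"
  by (rule \<phi>_inj) (simp_all add: proj_closed \<phi>_proj rcos_lift)

end

locale central_quotient_tensor = central_quotient +
  assumes zcal_tensor_sq: "zcal (tensor_sq E) =
    tens_left E (zcal E) <#>\<^bsub>tensor_sq E\<^esub> tens_right E (zcal E)"
begin

sublocale TE: mult_lie_algebra "tensor_sq E"
  by (rule mult_lie_algebra.intro [OF mult_lie_alg_tensor_sq])

sublocale TG: group "tensor_sq G" by (rule group_tensor_sq)

lemma tensor_map_proj_zcal:
  assumes "n \<in> zcal (tensor_sq E)"
  shows "tensor_map G proj n = \<one>\<^bsub>tensor_sq G\<^esub>"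
proof -
  note proj_hom = tensor_map_hom [OF mult_lie_alg_E mult_lie_alg_G proj_mlie_hom]
  let ?K = "kernel (tensor_sq E) (tensor_sq G) (tensor_map G proj)"
  have K: "subgroup ?K (tensor_sq E)"
    using proj_hom
    by (intro group_hom.subgroup_kernel) (simp add: group_hom_def group_hom_axioms_def)
  have gen_in_K: "tgen E a b \<in> ?K" if "a \<in> carrier E" "b \<in> carrier E" "a \<in> zcal E \<or> b \<in> zcal E" for a b
    using that
    by (auto simp: kernel_def tgen_def tcls_in_tensor_sq proj_zcal proj_closed
        tensor_map_tcls [OF mult_lie_alg_E mult_lie_alg_G proj_mlie_hom]
        G.tensor_sq_TGen_one_left G.tensor_sq_TGen_one_right)
  have "tens_left E (zcal E) \<subseteq> ?K" "tens_right E (zcal E) \<subseteq> ?K"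
    unfolding tens_left_def tens_right_def
    by (auto intro!: TE.generate_subgroup_incl [OF _ K] gen_in_K simp: E.zcal_closed)
  moreover obtain l r where "l \<in> tens_left E (zcal E)" "r \<in> tens_right E (zcal E)"
    "n = l \<otimes>\<^bsub>tensor_sq E\<^esub> r"
    using assms unfolding zcal_tensor_sq set_mult_def by blast
  ultimately have "l \<in> ?K" "r \<in> ?K" "n = l \<otimes>\<^bsub>tensor_sq E\<^esub> r" by auto
  then show ?thesis by (simp add: kernel_def hom_mult [OF proj_hom])
qed

lemma TGen_zcal_left_in_zcal:
  assumes "z \<in> zcal E" "b \<in> carrier E"
  shows "tcls E (TGen z b) \<in> zcal (tensor_sq E)"
proof -
  have "tcls E (TGen z b) \<in> tens_left E (zcal E)"
    unfolding tens_left_def tgen_def using assms by (blast intro: generate.incl)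
  moreover have "\<one>\<^bsub>tensor_sq E\<^esub> \<in> tens_right E (zcal E)"
    unfolding tens_right_def by (rule generate.one)
  ultimately show ?thesis
    using assms unfolding zcal_tensor_sq set_mult_def
    by (force simp: E.zcal_closed tcls_in_tensor_sq)
qed

lemma TGen_zcal_right_in_zcal:
  assumes "a \<in> carrier E" "z \<in> zcal E"
  shows "tcls E (TGen a z) \<in> zcal (tensor_sq E)"
proof -
  have "tcls E (TGen a z) \<in> tens_right E (zcal E)"
    unfolding tens_right_def tgen_def using assms by (blast intro: generate.incl)
  moreover have "\<one>\<^bsub>tensor_sq E\<^esub> \<in> tens_left E (zcal E)"
    unfolding tens_left_def by (rule generate.one)
  ultimately show ?thesis
    using assms unfolding zcal_tensor_sq set_mult_def
    by (force simp: E.zcal_closed tcls_in_tensor_sq)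
qed

definition zcoset :: "'c tterm \<Rightarrow> 'c tterm set set" where
  "zcoset t = zcal (tensor_sq E) #>\<^bsub>tensor_sq E\<^esub> tcls E t"

lemma zcoset_closed: "twf (carrier E) t \<Longrightarrow> zcoset t \<in> carrier (mlie_quot (tensor_sq E) (zcal (tensor_sq E)))"
  by (simp add: zcoset_def TE.rcosetsI TE.zcal_closed subsetI tcls_in_tensor_sq)

lemma zcoset_teq: "teq E s t \<Longrightarrow> zcoset s = zcoset t"
  by (simp add: zcoset_def tcls_eq_iff [symmetric])

lemma zcoset_TMul: "\<lbrakk>twf (carrier E) s; twf (carrier E) t\<rbrakk> \<Longrightarrow> zcoset (TMul s t) = zcoset s <#>\<^bsub>tensor_sq E\<^esub> zcoset t"
  by (simp add: zcoset_def TE.rcos_zcal_mult tcls_in_tensor_sq tensor_sq_mult_tcls)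

lemma zcoset_TInv: "twf (carrier E) t \<Longrightarrow> zcoset (TInv t) = inv\<^bsub>mlie_quot (tensor_sq E) (zcal (tensor_sq E))\<^esub> zcoset t"
  by (simp add: zcoset_def TE.rcos_zcal_inv tcls_in_tensor_sq tensor_sq_inv_tcls)

lemma zcoset_TStar: "\<lbrakk>twf (carrier E) s; twf (carrier E) t\<rbrakk> \<Longrightarrow>
  zcoset (TStar s t) = lstar (mlie_quot (tensor_sq E) (zcal (tensor_sq E))) (zcoset s) (zcoset t)"
  by (simp add: zcoset_def TE.rcos_zcal_star tcls_in_tensor_sq tensor_sq_star_tcls)

lemma zcoset_zcal: "\<lbrakk>twf (carrier E) t; tcls E t \<in> zcal (tensor_sq E)\<rbrakk> \<Longrightarrow> zcoset t = zcal (tensor_sq E)"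
  by (simp add: zcoset_def TE.coset_join2 TE.zcal_subgroup tcls_in_tensor_sq)

lemma zcoset_TGen_zcal_left:
  assumes z: "z \<in> zcal E" and ab: "a \<in> carrier E" "b \<in> carrier E"
  shows "zcoset (TGen (z \<otimes>\<^bsub>E\<^esub> a) b) = zcoset (TGen a b)"
proof -
  have "teq E (TGen (z \<otimes>\<^bsub>E\<^esub> a) b) (TMul (TGen (mconj E z a) (mconj E z b)) (TGen z b))"
    using z ab by (intro teq.rel2) (simp_all add: E.zcal_closed)
  then have "zcoset (TGen (z \<otimes>\<^bsub>E\<^esub> a) b) = zcoset (TGen a b) <#>\<^bsub>tensor_sq E\<^esub> zcoset (TGen z b)"
    using z ab by (simp add: zcoset_teq zcoset_TMul mconj_def E.zcal_conj E.zcal_closed)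
  also have "\<dots> = zcoset (TGen a b)"
    using z ab monoid.r_one [OF group.is_monoid [OF TE.group_mlie_quot_zcal] zcoset_closed [of "TGen a b"]]
    by (simp add: zcoset_zcal TGen_zcal_left_in_zcal E.zcal_closed)
  finally show ?thesis .
qed

lemma zcoset_TGen_zcal_right:
  assumes z: "z \<in> zcal E" and ab: "a \<in> carrier E" "b \<in> carrier E"
  shows "zcoset (TGen a (z \<otimes>\<^bsub>E\<^esub> b)) = zcoset (TGen a b)"
proof -
  have "teq E (TGen a (z \<otimes>\<^bsub>E\<^esub> b)) (TMul (TGen a z) (TGen (mconj E z a) (mconj E z b)))"
    using z ab by (intro teq.rel1) (simp_all add: E.zcal_closed)
  then have "zcoset (TGen a (z \<otimes>\<^bsub>E\<^esub> b)) = zcoset (TGen a z) <#>\<^bsub>tensor_sq E\<^esub> zcoset (TGen a b)"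
    using z ab by (simp add: zcoset_teq zcoset_TMul mconj_def E.zcal_conj E.zcal_closed)
  also have "\<dots> = zcoset (TGen a b)"
    using z ab monoid.l_one [OF group.is_monoid [OF TE.group_mlie_quot_zcal] zcoset_closed [of "TGen a b"]]
    by (simp add: zcoset_zcal TGen_zcal_right_in_zcal E.zcal_closed)
  finally show ?thesis .
qed

definition zequiv :: "'c \<Rightarrow> 'c \<Rightarrow> bool" where
  "zequiv a a' \<longleftrightarrow> a \<in> carrier E \<and> a' \<in> carrier E \<and> zcal E #>\<^bsub>E\<^esub> a = zcal E #>\<^bsub>E\<^esub> a'"

lemma zequivE:
  assumes "zequiv a a'"
  obtains z where "z \<in> zcal E" "a' = z \<otimes>\<^bsub>E\<^esub> a"
proof -
  have "a' \<in> zcal E #>\<^bsub>E\<^esub> a"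
    using assms unfolding zequiv_def by (intro E.repr_independenceD [OF E.zcal_subgroup]) auto
  with that show ?thesis unfolding r_coset_def by blast
qed

lemma zcoset_TGen_zequiv:
  assumes "zequiv a a'" "zequiv b b'"
  shows "zcoset (TGen a b) = zcoset (TGen a' b')"
proof -
  obtain z where z: "z \<in> zcal E" "a' = z \<otimes>\<^bsub>E\<^esub> a" using assms(1) by (rule zequivE)
  obtain w where w: "w \<in> zcal E" "b' = w \<otimes>\<^bsub>E\<^esub> b" using assms(2) by (rule zequivE)
  have ab: "a \<in> carrier E" "b \<in> carrier E" using assms by (auto simp: zequiv_def)
  show ?thesis
    using z w ab by (simp add: zcoset_TGen_zcal_left zcoset_TGen_zcal_right E.zcal_closed)
qed

lemma zcoset_rel_tterm:
  assumes "rel_tterm zequiv s t"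
  shows "zcoset s = zcoset t"
proof -
  from assms have "twf (carrier E) s \<and> twf (carrier E) t \<and> zcoset s = zcoset t"
  proof (induction rule: tterm.rel_induct)
    case (TGen a b a' b')
    then show ?case using zcoset_TGen_zequiv [OF TGen] by (simp add: zequiv_def)
  qed (auto simp: zcoset_TMul zcoset_TInv zcoset_TStar)
  then show ?thesis by blast
qed

lemma zequiv_lift_iff:
  "g \<in> carrier G \<Longrightarrow> zequiv (lift g) a \<longleftrightarrow> a \<in> carrier E \<and> zcal E #>\<^bsub>E\<^esub> a = \<phi> g"
  by (auto simp: zequiv_def rcos_lift)

lemma zequiv_lift_iff':
  "g \<in> carrier G \<Longrightarrow> zequiv a (lift g) \<longleftrightarrow> a \<in> carrier E \<and> zcal E #>\<^bsub>E\<^esub> a = \<phi> g"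
  by (auto simp: zequiv_def rcos_lift)

lemma twf_map_lift [simp]: "twf (carrier E) (map_tterm lift t)"
  by (induction t) auto

lemma zcoset_rel_teq_rel:
  "\<lbrakk>rel_tterm zequiv s s'; teq E s' t'; rel_tterm zequiv t' t\<rbrakk> \<Longrightarrow> zcoset s = zcoset t"
  using zcoset_rel_tterm zcoset_teq by metis

lemma zcoset_lift_teq:
  assumes "teq G s t"
  shows "zcoset (map_tterm lift s) = zcoset (map_tterm lift t)"
proof -
  note lifted = zequiv_lift_iff zequiv_lift_iff' rcos_lift \<phi>_mult \<phi>_inv \<phi>_star mconj_def
    E.rcos_zcal_mult [symmetric] E.rcos_zcal_inv [symmetric] E.rcos_zcal_star [symmetric]
  from assms show ?thesis
  proof (induction rule: teq.induct)
    txt \<open>A lifted defining relation of \<open>G \<otimes> G\<close> is, up to \<open>zequiv\<close> in each entry, the same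
      relation of \<open>E \<otimes> E\<close> at the lifted elements.\<close>
    case (rel1 x y y')
    then show ?case
      by (intro zcoset_rel_teq_rel [OF _ teq.rel1 [of "lift x" E "lift y" "lift y'"]]) (simp_all add: lifted)
  next
    case (rel2 x x' y)
    then show ?case
      by (intro zcoset_rel_teq_rel [OF _ teq.rel2 [of "lift x" E "lift x'" "lift y"]]) (simp_all add: lifted)
  next
    case (rel3 x x' y)
    then show ?case
      by (intro zcoset_rel_teq_rel [OF _ teq.rel3 [of "lift x" E "lift x'" "lift y"]]) (simp_all add: lifted)
  next
    case (rel4 x y y')
    then show ?case
      by (intro zcoset_rel_teq_rel [OF _ teq.rel4 [of "lift x" E "lift y" "lift y'"]]) (simp_all add: lifted)
  next
    case (rel5 x y x' y')
    then show ?case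
      by (intro zcoset_rel_teq_rel [OF _ teq.rel5 [of "lift x" E "lift y" "lift x'" "lift y'"]])
        (simp_all add: lifted)
  next
    case (cong_mul s s' t t')
    then show ?case by (simp add: zcoset_TMul)
  next
    case (cong_inv s s')
    then show ?case by (simp add: zcoset_TInv)
  next
    case (cong_star s s' t t')
    then show ?case by (simp add: zcoset_TStar)
  next
    case (sym s t)
    then show ?case by simp
  next
    case (trans s t u)
    then show ?case by simp
  qed (auto intro!: zcoset_teq simp: teq.assoc teq.lunit teq.linv teq.ax1 teq.ax2 teq.ax3 teq.ax4 teq.ax5)
qed

definition tensor_lift :: "'a tterm set \<Rightarrow> 'c tterm set set" where
  "tensor_lift A = zcoset (map_tterm lift (SOME t. t \<in> A))"

lemma tensor_lift_tcls: "tensor_lift (tcls G t) = zcoset (map_tterm lift t)"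
  unfolding tensor_lift_def by (rule zcoset_lift_teq [OF teq.sym [OF teq_some_tcls]])

lemma rel_tterm_lift_proj: "twf (carrier E) t \<Longrightarrow> rel_tterm zequiv (map_tterm lift (map_tterm proj t)) t"
  by (induction t) (simp_all add: zequiv_lift_iff proj_closed rcos_lift \<phi>_proj)

lemma map_tterm_proj_lift: "twf (carrier G) t \<Longrightarrow> map_tterm proj (map_tterm lift t) = t"
  by (induction t) (simp_all add: proj_lift)

lemma tensor_lift_inj_on: "inj_on tensor_lift (carrier (tensor_sq G))"
proof (rule inj_onI)
  fix x y assume x: "x \<in> carrier (tensor_sq G)" and y: "y \<in> carrier (tensor_sq G)"
    and eq: "tensor_lift x = tensor_lift y"
  obtain s where s: "twf (carrier G) s" "x = tcls G s" using x by (rule tensor_sq_carrierE)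
  obtain t where t: "twf (carrier G) t" "y = tcls G t" using y by (rule tensor_sq_carrierE)
  from eq have "zcoset (map_tterm lift s) = zcoset (map_tterm lift t)"
    by (simp add: s t tensor_lift_tcls)
  then have "tensor_map G proj (tcls E (map_tterm lift s)) = tensor_map G proj (tcls E (map_tterm lift t))"
    unfolding zcoset_def
    by (intro group_hom.hom_eq_if_rcos_eq [of _ _ _ "zcal (tensor_sq E)"])
       (auto simp: group_hom_def group_hom_axioms_def TE.zcal_subgroup
         kernel_def tensor_map_proj_zcal TE.zcal_closed tcls_in_tensor_sq
         tensor_map_hom [OF mult_lie_alg_E mult_lie_alg_G proj_mlie_hom])
  then show "x = y"
    using s t by (simp add: tensor_map_tcls [OF mult_lie_alg_E mult_lie_alg_G proj_mlie_hom] map_tterm_proj_lift)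
qed

lemma tensor_lift_iso:
  "tensor_lift \<in> mlie_iso (tensor_sq G) (mlie_quot (tensor_sq E) (zcal (tensor_sq E)))"
  unfolding mlie_iso_def iso_def hom_def bij_betw_def
proof (intro CollectI conjI ballI Pi_I tensor_lift_inj_on)
  fix x y assume "x \<in> carrier (tensor_sq G)" "y \<in> carrier (tensor_sq G)"
  then show "tensor_lift (x \<otimes>\<^bsub>tensor_sq G\<^esub> y) =
      tensor_lift x \<otimes>\<^bsub>mlie_quot (tensor_sq E) (zcal (tensor_sq E))\<^esub> tensor_lift y"
    and "tensor_lift (lstar (tensor_sq G) x y) =
      lstar (mlie_quot (tensor_sq E) (zcal (tensor_sq E))) (tensor_lift x) (tensor_lift y)"
    by (auto elim!: tensor_sq_carrierE
        simp: tensor_lift_tcls tensor_sq_mult_tcls tensor_sq_star_tcls zcoset_TMul zcoset_TStar)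
next
  show "tensor_lift ` carrier (tensor_sq G) = carrier (mlie_quot (tensor_sq E) (zcal (tensor_sq E)))"
  proof (intro equalityI subsetI)
    fix C assume "C \<in> tensor_lift ` carrier (tensor_sq G)"
    then show "C \<in> carrier (mlie_quot (tensor_sq E) (zcal (tensor_sq E)))"
      by (auto elim!: tensor_sq_carrierE simp: tensor_lift_tcls zcoset_closed simp del: mlie_quot_simps)
  next
    fix C assume "C \<in> carrier (mlie_quot (tensor_sq E) (zcal (tensor_sq E)))"
    then obtain t where t: "twf (carrier E) t" "C = zcoset t"
      by (auto simp: RCOSETS_def zcoset_def elim!: tensor_sq_carrierE)
    then have "C = tensor_lift (tcls G (map_tterm proj t))"
      using zcoset_rel_tterm [OF rel_tterm_lift_proj [OF t(1)]] by (simp add: tensor_lift_tcls)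
    moreover have "tcls G (map_tterm proj t) \<in> carrier (tensor_sq G)"
      using t by (intro tcls_in_tensor_sq twf_map_tterm) (auto simp: proj_closed)
    ultimately show "C \<in> tensor_lift ` carrier (tensor_sq G)" by blast
  qed
qed (auto elim!: tensor_sq_carrierE simp: tensor_lift_tcls zcoset_closed simp del: mlie_quot_simps)

end

theorem proposition3p6:
  fixes G :: "'a mlie" and E :: "'e mlie"
  assumes "mult_lie_alg G" and "mult_lie_alg E"
    and "mlie_is_iso G (mlie_quot E (zcal E))"
    and "zcal (tensor_sq E) =
           tens_left E (zcal E) <#>\<^bsub>tensor_sq E\<^esub> tens_right E (zcal E)"
  shows "lie_capable_in TYPE('e tterm set) (tensor_sq G)"
proof -
  from assms(3) obtain \<phi> where "\<phi> \<in> mlie_iso G (mlie_quot E (zcal E))"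
    by (auto simp: mlie_is_iso_def)
  with assms interpret central_quotient_tensor G E \<phi>
    by unfold_locales
  show ?thesis
    unfolding lie_capable_in_def mlie_is_iso_def
    using mult_lie_alg_tensor_sq tensor_lift_iso by blast
qed

end
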